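(* An auction mechanism $(\pi,x)$ with display prices is incentive compatible if and only if for every advertiser $i$, every display price profile $\mathbf{p}$ and every cost-report profile $\mathbf{c}'_{-i}$ of the others: (1) $c_i\mapsto\pi_i(c_i,\mathbf{c}'_{-i},\mathbf{p})$ is non-increasing on $[\underline{c}_i,\overline{c}_i]$; and (2) there is a quantity $U_i(\mathbf{c}'_{-i},\mathbf{p})$ not depending on $i$'s cost report such that for all $c_i\in[\underline{c}_i,\overline{c}_i]$, $$x_i(c_i,\mathbf{c}'_{-i},\mathbf{p})=v_i(c_i,p_i)\pi_i(c_i,\mathbf{c}'_{-i},\mathbf{p})-\lambda_i(p_i)\int_{c_i}^{\overline{c}_i}\pi_i(z,\mathbf{c}'_{-i},\mathbf{p})\,dz-U_i(\mathbf{c}'_{-i},\mathbf{p}).$$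
   Context: There are advertisers $N=\{1,\dots,n\}$ competing for a single ad slot. Advertiser $i$ has a private product cost $c_i\in[\underline{c}_i,\overline{c}_i]$ and sets a display price $p_i$. Her conversion-rate function is $\lambda_i:\mathbb{R}\to(0,1]$, and her value when displayed at price $p_i$ is $v_i(c_i,p_i)=(p_i-c_i)\lambda_i(p_i)$. Each advertiser reports a cost $c_i'\in[\underline{c}_i,\overline{c}_i]$ and a display price $p_i$; write $\mathbf{c}'=(c_i',\mathbf{c}'_{-i})$, $\mathbf{p}=(p_i,\mathbf{p}_{-i})$. An auction mechanism $(\pi,x)$ consists of allocation functions $\pi_i(\mathbf{c}',\mathbf{p})\in\{0,1\}$ (at most one advertiser wins the slot) and payment functions $x_i(\mathbf{c}',\mathbf{p})\in\mathbb{R}$. The utility of advertiser $i$ with true cost $c_i$ is $u_i(c_i,\mathbf{c}',\mathbf{p})=v_i(c_i,p_i)\pi_i(\mathbf{c}',\mathbf{p})-x_i(\mathbf{c}',\mathbf{p})$. The mechanism is incentive compatible (IC) if for all $i$, all $c_i$, all $\mathbf{p}$ and all $\mathbf{c}'$: $u_i(c_i,(c_i,\mathbf{c}'_{-i}),\mathbf{p})\ge u_i(c_i,(c_i',\mathbf{c}'_{-i}),\mathbf{p})$. *)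

theory Defs
  imports "HOL-Analysis.Analysis"
begin

text \<open>Advertisers are the elements of a finite type 'a.
 Allocation pi i c p (real-valued, in {0,1}), payment x i c p.\<close>

definition adv_value :: "('a \<Rightarrow> real \<Rightarrow> real) \<Rightarrow> 'a \<Rightarrow> real \<Rightarrow> real \<Rightarrow> real" where
  "adv_value lam i ci pr = (pr - ci) * lam i pr"

definition utility ::
  "('a \<Rightarrow> real \<Rightarrow> real) \<Rightarrow> ('a \<Rightarrow> ('a \<Rightarrow> real) \<Rightarrow> ('a \<Rightarrow> real) \<Rightarrow> real)
   \<Rightarrow> ('a \<Rightarrow> ('a \<Rightarrow> real) \<Rightarrow> ('a \<Rightarrow> real) \<Rightarrow> real)
   \<Rightarrow> 'a \<Rightarrow> real \<Rightarrow> ('a \<Rightarrow> real) \<Rightarrow> ('a \<Rightarrow> real) \<Rightarrow> real" where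
  "utility lam alloc pay i ci c' p = adv_value lam i ci (p i) * alloc i c' p - pay i c' p"

definition cost_profile :: "('a \<Rightarrow> real) \<Rightarrow> ('a \<Rightarrow> real) \<Rightarrow> ('a \<Rightarrow> real) \<Rightarrow> bool" where
  "cost_profile lo hi c' \<longleftrightarrow> (\<forall>j. c' j \<in> {lo j..hi j})"

definition auction_mechanism ::
  "('a \<Rightarrow> real) \<Rightarrow> ('a \<Rightarrow> real) \<Rightarrow> ('a \<Rightarrow> ('a \<Rightarrow> real) \<Rightarrow> ('a \<Rightarrow> real) \<Rightarrow> real) \<Rightarrow> bool" where
  "auction_mechanism lo hi alloc \<longleftrightarrow>
     (\<forall>c' p. cost_profile lo hi c' \<longrightarrow>
        (\<forall>i. alloc i c' p \<in> {0, 1}) \<and> card {i. alloc i c' p = 1} \<le> 1)"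

definition incentive_compatible ::
  "('a \<Rightarrow> real) \<Rightarrow> ('a \<Rightarrow> real) \<Rightarrow> ('a \<Rightarrow> real \<Rightarrow> real)
   \<Rightarrow> ('a \<Rightarrow> ('a \<Rightarrow> real) \<Rightarrow> ('a \<Rightarrow> real) \<Rightarrow> real)
   \<Rightarrow> ('a \<Rightarrow> ('a \<Rightarrow> real) \<Rightarrow> ('a \<Rightarrow> real) \<Rightarrow> real) \<Rightarrow> bool" where
  "incentive_compatible lo hi lam alloc pay \<longleftrightarrow>
     (\<forall>i ci p c'. ci \<in> {lo i..hi i} \<longrightarrow> cost_profile lo hi c' \<longrightarrow>
        utility lam alloc pay i ci (c'(i := ci)) p \<ge> utility lam alloc pay i ci c' p)"

end

theory Submission
  imports Defs
begin

text \<open>Fix everything except advertiser i's cost report z, and write f z for her allocation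
 and g z for her utility when reporting truthfully. A true cost c reporting z then earns
 g z + (z - c) L f z with L the conversion rate, so IC is the two-sided bound
 (z - c) L f z \<le> g c - g z \<le> (z - c) L f c for c \<le> z. It forces f to be non-increasing,
 and for non-increasing f it is satisfied by L times the integral of f over [c, hi]. Any two
 solutions differ by a function whose increment over [c, z] is bounded by (z - c) L (f c - f z);
 cutting [c, z] into n equal pieces and telescoping improves this bound to
 (z - c) L (f c - f z) / n, so the difference is constant. This is Myerson's payment identity.\<close>

definition ic_on :: "real set \<Rightarrow> real \<Rightarrow> (real \<Rightarrow> real) \<Rightarrow> (real \<Rightarrow> real) \<Rightarrow> bool" where
  "ic_on S L f g \<longleftrightarrow> (\<forall>c\<in>S. \<forall>z\<in>S. g z + (z - c) * L * f z \<le> g c)"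

lemma ic_on_iff_bounds:
  "ic_on S L f g \<longleftrightarrow>
    (\<forall>c\<in>S. \<forall>z\<in>S. c \<le> z \<longrightarrow> (z - c) * L * f z \<le> g c - g z \<and> g c - g z \<le> (z - c) * L * f c)"
  unfolding ic_on_def
proof (intro iffI ballI impI)
  fix c z assume ic: "\<forall>c\<in>S. \<forall>z\<in>S. g z + (z - c) * L * f z \<le> g c"
    and "c \<in> S" "z \<in> S" "c \<le> z"
  then have "g z + (z - c) * L * f z \<le> g c" "g c + (c - z) * L * f c \<le> g z"
    by auto
  then show "(z - c) * L * f z \<le> g c - g z \<and> g c - g z \<le> (z - c) * L * f c"
    by (simp add: left_diff_distrib)
next
  fix c z assume bounds: "\<forall>c\<in>S. \<forall>z\<in>S. c \<le> z \<longrightarrow>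
      (z - c) * L * f z \<le> g c - g z \<and> g c - g z \<le> (z - c) * L * f c"
    and "c \<in> S" "z \<in> S"
  then consider "(z - c) * L * f z \<le> g c - g z" | "g z - g c \<le> (c - z) * L * f z"
    by (metis linorder_le_cases)
  then show "g z + (z - c) * L * f z \<le> g c"
    by cases (simp_all add: left_diff_distrib)
qed

lemma ic_on_imp_antimono_on:
  assumes "ic_on S L f g" and "0 < L"
  shows "antimono_on S f"
proof (rule monotone_onI)
  fix c z assume "c \<in> S" "z \<in> S" "c \<le> z"
  then have "(z - c) * L * f z \<le> (z - c) * L * f c"
    using assms(1) unfolding ic_on_iff_bounds by fastforce
  then show "f z \<le> f c"
    using \<open>0 < L\<close> \<open>c \<le> z\<close> by (cases "c = z") (auto simp: mult_le_cancel_left_pos)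
qed

lemma antimono_on_integrable:
  fixes f :: "real \<Rightarrow> real"
  assumes "antimono_on {a..b} f"
  shows "f integrable_on {a..b}"
proof -
  have "mono_on {a..b} (\<lambda>x. - f x)"
    using assms by (auto simp: monotone_on_def)
  then have "(\<lambda>x. - f x) integrable_on {a..b}"
    by (rule integrable_on_mono_on)
  then show ?thesis
    using integrable_neg by fastforce
qed

lemma integral_antimono_on_bounds:
  fixes f :: "real \<Rightarrow> real"
  assumes "antimono_on {c..z} f" and "c \<le> z"
  shows "(z - c) * f z \<le> integral {c..z} f" and "integral {c..z} f \<le> (z - c) * f c"
proof -
  have f_int: "f integrable_on {c..z}"
    using antimono_on_integrable[OF assms(1)] .
  have f_between: "f z \<le> f x" "f x \<le> f c" if "x \<in> {c..z}" for x
    using that assms by (auto simp: monotone_on_def)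
  have "integral {c..z} (\<lambda>_. f z) \<le> integral {c..z} f"
    using f_int f_between(1) by (intro integral_le) auto
  then show "(z - c) * f z \<le> integral {c..z} f"
    using \<open>c \<le> z\<close> by simp
  have "integral {c..z} f \<le> integral {c..z} (\<lambda>_. f c)"
    using f_int f_between(2) by (intro integral_le) auto
  then show "integral {c..z} f \<le> (z - c) * f c"
    using \<open>c \<le> z\<close> by simp
qed

lemma ic_on_integral:
  fixes f :: "real \<Rightarrow> real"
  assumes f: "antimono_on {a..b} f" and "0 \<le> L"
  shows "ic_on {a..b} L f (\<lambda>c. L * integral {c..b} f + U)"
  unfolding ic_on_iff_bounds
proof (intro ballI impI)
  fix c z assume c: "c \<in> {a..b}" and z: "z \<in> {a..b}" and "c \<le> z"
  have "f integrable_on {c..b}"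
    using c antimono_on_integrable[OF monotone_on_subset[OF f]] by auto
  then have combine: "integral {c..z} f + integral {z..b} f = integral {c..b} f"
    using \<open>c \<le> z\<close> z by (intro Henstock_Kurzweil_Integration.integral_combine) auto
  have "antimono_on {c..z} f"
    by (rule monotone_on_subset[OF f]) (use c z in auto)
  note bounds = integral_antimono_on_bounds[OF this \<open>c \<le> z\<close>]
  have "(L * integral {c..b} f + U) - (L * integral {z..b} f + U) = L * integral {c..z} f"
    by (simp add: combine[symmetric] algebra_simps)
  then show "(z - c) * L * f z \<le> (L * integral {c..b} f + U) - (L * integral {z..b} f + U) \<and>
      (L * integral {c..b} f + U) - (L * integral {z..b} f + U) \<le> (z - c) * L * f c"
    using mult_left_mono[OF bounds(1) \<open>0 \<le> L\<close>] mult_left_mono[OF bounds(2) \<open>0 \<le> L\<close>]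
    by (simp add: mult.commute mult.left_commute)
qed

lemma const_if_abs_diff_le_width_times_drop:
  fixes f h :: "real \<Rightarrow> real"
  assumes f: "antimono_on {a..b} f"
    and bound: "\<And>c z. c \<in> {a..b} \<Longrightarrow> z \<in> {a..b} \<Longrightarrow> c \<le> z \<Longrightarrow> \<bar>h c - h z\<bar> \<le> (z - c) * (f c - f z)"
    and c: "c \<in> {a..b}" and z: "z \<in> {a..b}"
  shows "h c = h z"
proof -
  have "h c = h z" if c: "c \<in> {a..b}" and z: "z \<in> {a..b}" and "c \<le> z" for c z
  proof -
    have refined: "\<bar>h c - h z\<bar> \<le> (z - c) * (f c - f z) / real n" if "0 < n" for n :: nat
    proof -
      define d where "d = (z - c) / real n"
      define x where "x k = c + real k * d" for k :: nat
      have d_nonneg: "0 \<le> d" using \<open>c \<le> z\<close> by (simp add: d_def)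
      have x_in: "x k \<in> {a..b}" if "k \<le> n" for k
      proof -
        have "0 \<le> real k * d" "real k * d \<le> real n * d"
          using that d_nonneg by (auto intro: mult_right_mono)
        moreover have "real n * d = z - c" using \<open>0 < n\<close> by (simp add: d_def)
        ultimately show ?thesis using c z by (auto simp: x_def)
      qed
      have "\<bar>h c - h (x k)\<bar> \<le> d * (f c - f (x k))" if "k \<le> n" for k
        using that
      proof (induction k)
        case 0
        then show ?case by (simp add: x_def)
      next
        case (Suc k)
        have step: "x (Suc k) - x k = d" by (simp add: x_def algebra_simps)
        have "\<bar>h c - h (x (Suc k))\<bar> \<le> \<bar>h c - h (x k)\<bar> + \<bar>h (x k) - h (x (Suc k))\<bar>"
          by arith
        also have "\<dots> \<le> d * (f c - f (x k)) + (x (Suc k) - x k) * (f (x k) - f (x (Suc k)))"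
          using Suc bound[OF x_in x_in, of k "Suc k"] step d_nonneg by simp
        also have "\<dots> = d * (f c - f (x (Suc k)))"
          by (simp add: step algebra_simps)
        finally show ?case .
      qed
      then have "\<bar>h c - h (x n)\<bar> \<le> d * (f c - f (x n))" by blast
      moreover have "x n = z" using \<open>0 < n\<close> by (simp add: x_def d_def)
      ultimately show ?thesis by (simp add: d_def)
    qed
    have "(\<lambda>n. (z - c) * (f c - f z) / real n) \<longlonglongrightarrow> 0"
      by (rule lim_const_over_n)
    then have "\<bar>h c - h z\<bar> \<le> 0"
      by (rule LIMSEQ_le_const) (use refined in \<open>auto intro: exI[of _ 1]\<close>)
    then show ?thesis by simp
  qed
  then show ?thesis using c z by (metis linorder_le_cases)
qed

lemma ic_on_unique:
  assumes g1: "ic_on {a..b} L f g1" and g2: "ic_on {a..b} L f g2"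
    and f: "antimono_on {a..b} f" and "0 \<le> L"
    and c: "c \<in> {a..b}" and z: "z \<in> {a..b}"
  shows "g1 c - g2 c = g1 z - g2 z"
proof -
  have "antimono_on {a..b} (\<lambda>x. L * f x)"
    using f \<open>0 \<le> L\<close> by (auto simp: monotone_on_def mult_left_mono)
  then show ?thesis
  proof (rule const_if_abs_diff_le_width_times_drop[OF _ _ c z])
    fix c z assume "c \<in> {a..b}" "z \<in> {a..b}" "c \<le> z"
    then have "(z - c) * L * f z \<le> g1 c - g1 z" "g1 c - g1 z \<le> (z - c) * L * f c"
      and "(z - c) * L * f z \<le> g2 c - g2 z" "g2 c - g2 z \<le> (z - c) * L * f c"
      using g1 g2 unfolding ic_on_iff_bounds by auto
    moreover have "(z - c) * (L * f c - L * f z) = (z - c) * L * f c - (z - c) * L * f z"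
      by (simp add: algebra_simps)
    ultimately show "\<bar>(g1 c - g2 c) - (g1 z - g2 z)\<bar> \<le> (z - c) * (L * f c - L * f z)"
      by (simp add: abs_le_iff)
  qed
qed

lemma ic_on_iff:
  fixes f g :: "real \<Rightarrow> real"
  assumes "0 < L"
  shows "ic_on {a..b} L f g \<longleftrightarrow>
    antimono_on {a..b} f \<and> (\<exists>U. \<forall>c\<in>{a..b}. g c = L * integral {c..b} f + U)"
proof
  assume ic: "ic_on {a..b} L f g"
  then have f: "antimono_on {a..b} f"
    using \<open>0 < L\<close> by (rule ic_on_imp_antimono_on)
  have "g c = L * integral {c..b} f + g b" if c: "c \<in> {a..b}" for c
  proof -
    have "g c - (L * integral {c..b} f + 0) = g b - (L * integral {b..b} f + 0)"
      by (rule ic_on_unique[OF ic ic_on_integral[OF f] f]) (use \<open>0 < L\<close> c in auto)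
    then show ?thesis by simp
  qed
  then show "antimono_on {a..b} f \<and> (\<exists>U. \<forall>c\<in>{a..b}. g c = L * integral {c..b} f + U)"
    using f by blast
next
  assume "antimono_on {a..b} f \<and> (\<exists>U. \<forall>c\<in>{a..b}. g c = L * integral {c..b} f + U)"
  then obtain U where f: "antimono_on {a..b} f" and g: "\<forall>c\<in>{a..b}. g c = L * integral {c..b} f + U"
    by blast
  then show "ic_on {a..b} L f g"
    using ic_on_integral[OF f, of L U] \<open>0 < L\<close> by (simp add: ic_on_def)
qed

lemma utility_misreport:
  "utility lam alloc pay i c (c'(i := z)) p =
    utility lam alloc pay i z (c'(i := z)) p + (z - c) * lam i (p i) * alloc i (c'(i := z)) p"
  unfolding utility_def adv_value_def by (simp add: algebra_simps)

lemma incentive_compatible_iff_ic_on: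
  "incentive_compatible lo hi lam alloc pay \<longleftrightarrow>
    (\<forall>i p c'. cost_profile lo hi c' \<longrightarrow>
      ic_on {lo i..hi i} (lam i (p i)) (\<lambda>z. alloc i (c'(i := z)) p)
        (\<lambda>z. utility lam alloc pay i z (c'(i := z)) p))"
  (is "_ \<longleftrightarrow> (\<forall>i p c'. _ \<longrightarrow> ?ic i p c')")
proof
  assume "incentive_compatible lo hi lam alloc pay"
  then have IC: "utility lam alloc pay i ci c' p \<le> utility lam alloc pay i ci (c'(i := ci)) p"
    if "ci \<in> {lo i..hi i}" "cost_profile lo hi c'" for i ci p c'
    using that unfolding incentive_compatible_def by blast
  show "\<forall>i p c'. cost_profile lo hi c' \<longrightarrow> ?ic i p c'"
    unfolding ic_on_def
  proof (intro allI impI ballI)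
    fix i p c' c z assume "cost_profile lo hi c'" and c: "c \<in> {lo i..hi i}" and "z \<in> {lo i..hi i}"
    then have "cost_profile lo hi (c'(i := z))"
      by (auto simp: cost_profile_def)
    from IC[OF c this, of p] show "utility lam alloc pay i z (c'(i := z)) p
        + (z - c) * lam i (p i) * alloc i (c'(i := z)) p \<le> utility lam alloc pay i c (c'(i := c)) p"
      using utility_misreport[of lam alloc pay i c c' z p] by simp
  qed
next
  assume ic: "\<forall>i p c'. cost_profile lo hi c' \<longrightarrow> ?ic i p c'"
  show "incentive_compatible lo hi lam alloc pay"
    unfolding incentive_compatible_def
  proof (intro allI impI)
    fix i ci p c' assume ci: "ci \<in> {lo i..hi i}" and c': "cost_profile lo hi c'"
    then have "c' i \<in> {lo i..hi i}"
      by (simp add: cost_profile_def)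
    with ic c' ci have "utility lam alloc pay i (c' i) (c'(i := c' i)) p
        + (c' i - ci) * lam i (p i) * alloc i (c'(i := c' i)) p \<le> utility lam alloc pay i ci (c'(i := ci)) p"
      unfolding ic_on_def by blast
    then show "utility lam alloc pay i ci c' p \<le> utility lam alloc pay i ci (c'(i := ci)) p"
      using utility_misreport[of lam alloc pay i ci c' "c' i" p] by simp
  qed
qed

theorem theorem1:
  fixes lo hi :: "'a::finite \<Rightarrow> real"
    and lam :: "'a \<Rightarrow> real \<Rightarrow> real"
    and alloc pay :: "'a \<Rightarrow> ('a \<Rightarrow> real) \<Rightarrow> ('a \<Rightarrow> real) \<Rightarrow> real"
  assumes bounds: "\<And>i. lo i \<le> hi i"
    and lam_range: "\<And>i q. 0 < lam i q \<and> lam i q \<le> 1"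
    and mech: "auction_mechanism lo hi alloc"
  shows "incentive_compatible lo hi lam alloc pay \<longleftrightarrow>
    (\<forall>i p c'. cost_profile lo hi c' \<longrightarrow>
       antimono_on {lo i..hi i} (\<lambda>z. alloc i (c'(i := z)) p) \<and>
       (\<exists>U. \<forall>ci \<in> {lo i..hi i}.
          pay i (c'(i := ci)) p =
            adv_value lam i ci (p i) * alloc i (c'(i := ci)) p
            - lam i (p i) * integral {ci..hi i} (\<lambda>z. alloc i (c'(i := z)) p)
            - U))"
proof -
  have lam_pos: "0 < lam i q" for i q
    using lam_range by blast
  have payment_form:
    "utility lam alloc pay i ci (c'(i := ci)) p = lam i (p i) * I + U \<longleftrightarrow>
      pay i (c'(i := ci)) p = adv_value lam i ci (p i) * alloc i (c'(i := ci)) p - lam i (p i) * I - U"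
    for i ci c' p I U
    unfolding utility_def by linarith
  show ?thesis
    unfolding incentive_compatible_iff_ic_on ic_on_iff[OF lam_pos] payment_form ..
qed

end
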